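(* For all $n\ge 1$, $|F_n(321,14253)|=2^n-\binom{n}{2}-1$.
   Context: A permutation $\pi$ avoids a classical pattern $p\in S_k$ if no subsequence of $\pi$ of length $k$ is order-isomorphic to $p$. A Fishburn permutation is a permutation $\pi=\pi_1\cdots\pi_n$ of $[n]$ for which there are no indices $i<j$ with $\pi_j<\pi_i<\pi_{i+1}$ and $\pi_i=\pi_j+1$. $F_n(\sigma_1,\dots,\sigma_k)$ denotes the set of Fishburn permutations of length $n$ avoiding each of the classical patterns $\sigma_1,\dots,\sigma_k$. *)

theory Defs
  imports Main
begin

text \<open>Permutations of [n] are represented as lists of length n containing each of 1..n exactly once.
Positions are 0-based list indices.\<close>

definition perms :: "nat \<Rightarrow> nat list set" where
  "perms n = {\<pi>. distinct \<pi> \<and> set \<pi> = {1..n}}"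

definition contains :: "nat list \<Rightarrow> nat list \<Rightarrow> bool" where
  "contains \<pi> p = (\<exists>idx :: nat \<Rightarrow> nat.
      (\<forall>a b. a < b \<and> b < length p \<longrightarrow> idx a < idx b) \<and>
      (\<forall>a < length p. idx a < length \<pi>) \<and>
      (\<forall>a < length p. \<forall>b < length p. (\<pi> ! idx a < \<pi> ! idx b) \<longleftrightarrow> (p ! a < p ! b)))"

definition avoids :: "nat list \<Rightarrow> nat list \<Rightarrow> bool" where
  "avoids \<pi> p = (\<not> contains \<pi> p)"

definition fishburn :: "nat list \<Rightarrow> bool" where
  "fishburn \<pi> = (\<not> (\<exists>i j. i < j \<and> j < length \<pi> \<and> i + 1 < length \<pi> \<and>
      \<pi> ! j < \<pi> ! i \<and> \<pi> ! i < \<pi> ! (i + 1) \<and> \<pi> ! i = \<pi> ! j + 1))"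

definition F :: "nat \<Rightarrow> nat list list \<Rightarrow> nat list set" where
  "F n ps = {\<pi> \<in> perms n. fishburn \<pi> \<and> (\<forall>p \<in> set ps. avoids \<pi> p)}"

end

theory Submission
  imports Defs
begin

text \<open>Sort \<open>\<pi> \<in> F\<^sub>n(321, 14253)\<close> by its last entry. If it is \<open>n\<close>, deleting it is a bijection onto
  \<open>F\<^sub>n\<^sub>-\<^sub>1(321, 14253)\<close>; if it is \<open>n - 1\<close>, deleting it and renaming \<open>n\<close> to \<open>n - 1\<close> is one as well,
  because an entry lying below at most one earlier entry cannot be the last letter of a 321
  or a 14253, nor the smaller letter of a Fishburn pair. If the last entry \<open>v\<close> is at most
  \<open>n - 2\<close>, the two patterns and the Fishburn condition force
  \<open>\<pi> = (v+1) 1 \<dots> j (v+2) \<dots> n (j+1) \<dots> (v-1) v\<close> with \<open>1 \<le> j < v\<close>, which leaves \<open>(n-2 choose 2)\<close>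
  permutations. So \<open>a\<^sub>n = 2 a\<^sub>n\<^sub>-\<^sub>1 + (n-2 choose 2)\<close> with \<open>a\<^sub>1 = 1\<close>, whose solution is
  \<open>2\<^sup>n - (n choose 2) - 1\<close>.\<close>

definition FA :: "nat \<Rightarrow> nat list set" where
  "FA n = F n [[3,2,1], [1,4,2,5,3]]"

lemma contains_321_iff:
  "contains \<pi> [3,2,1] \<longleftrightarrow>
    (\<exists>i j k. i < j \<and> j < k \<and> k < length \<pi> \<and> \<pi>!j < \<pi>!i \<and> \<pi>!k < \<pi>!j)"
proof
  assume "contains \<pi> [3,2,1]"
  then obtain idx where mono: "\<forall>a b. a < b \<and> b < length [3,2,1::nat] \<longrightarrow> idx a < idx b"
    and bound: "\<forall>a<length [3,2,1::nat]. idx a < length \<pi>"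
    and order: "\<forall>a<length [3,2,1::nat]. \<forall>b<length [3,2,1::nat].
      (\<pi> ! idx a < \<pi> ! idx b) \<longleftrightarrow> ([3,2,1::nat] ! a < [3,2,1] ! b)"
    unfolding contains_def by blast
  have "idx 0 < idx 1" "idx 1 < idx 2" "idx 2 < length \<pi>" using mono bound by auto
  moreover have "\<pi>!idx 1 < \<pi>!idx 0" "\<pi>!idx 2 < \<pi>!idx 1"
    using order[rule_format, of 1 0] order[rule_format, of 2 1] by auto
  ultimately show "\<exists>i j k. i < j \<and> j < k \<and> k < length \<pi> \<and> \<pi>!j < \<pi>!i \<and> \<pi>!k < \<pi>!j" by blast
next
  assume "\<exists>i j k. i < j \<and> j < k \<and> k < length \<pi> \<and> \<pi>!j < \<pi>!i \<and> \<pi>!k < \<pi>!j"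
  then obtain i j k where "i < j" "j < k" "k < length \<pi>" "\<pi>!j < \<pi>!i" "\<pi>!k < \<pi>!j" by blast
  then show "contains \<pi> [3,2,1]" unfolding contains_def
    by (intro exI[of _ "\<lambda>a. [i,j,k] ! a"]) (auto simp: less_Suc_eq numeral_eq_Suc)
qed

lemma contains_14253_iff:
  "contains \<pi> [1,4,2,5,3] \<longleftrightarrow>
    (\<exists>a b c d e. a < b \<and> b < c \<and> c < d \<and> d < e \<and> e < length \<pi> \<and>
      \<pi>!a < \<pi>!c \<and> \<pi>!c < \<pi>!e \<and> \<pi>!e < \<pi>!b \<and> \<pi>!b < \<pi>!d)"
proof
  assume "contains \<pi> [1,4,2,5,3]"
  then obtain idx where mono: "\<forall>a b. a < b \<and> b < length [1,4,2,5,3::nat] \<longrightarrow> idx a < idx b"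
    and bound: "\<forall>a<length [1,4,2,5,3::nat]. idx a < length \<pi>"
    and order: "\<forall>a<length [1,4,2,5,3::nat]. \<forall>b<length [1,4,2,5,3::nat].
      (\<pi> ! idx a < \<pi> ! idx b) \<longleftrightarrow> ([1,4,2,5,3::nat] ! a < [1,4,2,5,3] ! b)"
    unfolding contains_def by blast
  have "idx 0 < idx 1" "idx 1 < idx 2" "idx 2 < idx 3" "idx 3 < idx 4" "idx 4 < length \<pi>"
    using mono bound by auto
  moreover have "\<pi>!idx 0 < \<pi>!idx 2" "\<pi>!idx 2 < \<pi>!idx 4" "\<pi>!idx 4 < \<pi>!idx 1" "\<pi>!idx 1 < \<pi>!idx 3"
    using order[rule_format, of 0 2] order[rule_format, of 2 4]
      order[rule_format, of 4 1] order[rule_format, of 1 3] by auto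
  ultimately show "\<exists>a b c d e. a < b \<and> b < c \<and> c < d \<and> d < e \<and> e < length \<pi> \<and>
      \<pi>!a < \<pi>!c \<and> \<pi>!c < \<pi>!e \<and> \<pi>!e < \<pi>!b \<and> \<pi>!b < \<pi>!d" by blast
next
  assume "\<exists>a b c d e. a < b \<and> b < c \<and> c < d \<and> d < e \<and> e < length \<pi> \<and>
      \<pi>!a < \<pi>!c \<and> \<pi>!c < \<pi>!e \<and> \<pi>!e < \<pi>!b \<and> \<pi>!b < \<pi>!d"
  then obtain a b c d e where "a < b" "b < c" "c < d" "d < e" "e < length \<pi>"
    "\<pi>!a < \<pi>!c" "\<pi>!c < \<pi>!e" "\<pi>!e < \<pi>!b" "\<pi>!b < \<pi>!d" by blast
  then show "contains \<pi> [1,4,2,5,3]" unfolding contains_def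
    by (intro exI[of _ "\<lambda>x. [a,b,c,d,e] ! x"]) (auto simp: less_Suc_eq numeral_eq_Suc)
qed

lemma contains_Nil: "contains [] p \<longleftrightarrow> p = []"
  by (cases p) (auto simp: contains_def)

lemma contains_map_strict_mono_on:
  assumes "strict_mono_on (set \<sigma>) f"
  shows "contains (map f \<sigma>) p \<longleftrightarrow> contains \<sigma> p"
proof -
  have "f (\<sigma>!i) < f (\<sigma>!i') \<longleftrightarrow> \<sigma>!i < \<sigma>!i'" if "i < length \<sigma>" "i' < length \<sigma>" for i i'
    using that assms by (simp add: strict_mono_on_less)
  then show ?thesis unfolding contains_def
    by (intro iffI; elim exE; rule_tac x=idx in exI) auto
qed

lemma contains_append: "contains \<sigma> p \<Longrightarrow> contains (\<sigma> @ ys) p"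
  unfolding contains_def by (elim exE, rule_tac x=idx in exI) (auto simp: nth_append)

lemma contains_snocD:
  assumes c: "contains (\<sigma> @ [x]) p"
    and pat: "a1 < a2" "a2 < length p - 1" "p!(length p - 1) < p!a1" "p!(length p - 1) < p!a2"
    and few_above: "\<And>i i'. i < i' \<Longrightarrow> i' < length \<sigma> \<Longrightarrow> \<not> (x < \<sigma>!i \<and> x < \<sigma>!i')"
  shows "contains \<sigma> p"
proof -
  obtain idx where mono: "\<forall>a b. a < b \<and> b < length p \<longrightarrow> idx a < idx b"
    and bound: "\<forall>a<length p. idx a < length (\<sigma>@[x])"
    and order: "\<forall>a<length p. \<forall>b<length p. ((\<sigma>@[x]) ! idx a < (\<sigma>@[x]) ! idx b) \<longleftrightarrow> (p ! a < p ! b)"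
    using c unfolding contains_def by blast
  define l where "l = length p - 1"
  have l: "l < length p" "a1 < l" "a2 < l" using pat l_def by auto
  show ?thesis
  proof (cases "idx l < length \<sigma>")
    case True
    have "idx a < length \<sigma>" if "a < length p" for a
    proof -
      have "a < l \<or> a = l" using that l_def by auto
      then show ?thesis using mono[rule_format, of a l] True l(1) by auto
    qed
    then show ?thesis unfolding contains_def
      using mono order by (intro exI[of _ idx]) (auto simp: nth_append)
  next
    case False
    then have last: "idx l = length \<sigma>" using bound l by auto
    have "idx a1 < idx a2" "idx a2 < length \<sigma>"
      using mono[rule_format, of a1 a2] mono[rule_format, of a2 l] l last pat(1) by auto
    moreover have "x < \<sigma>!idx a1" "x < \<sigma>!idx a2"
      using order[rule_format, of l a1] order[rule_format, of l a2] l pat last calculation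
      by (auto simp: l_def nth_append)
    ultimately show ?thesis using few_above by blast
  qed
qed

definition fishburn_pair :: "nat list \<Rightarrow> nat \<Rightarrow> nat \<Rightarrow> bool" where
  "fishburn_pair \<pi> i j \<longleftrightarrow> i < j \<and> j < length \<pi> \<and> i + 1 < length \<pi> \<and>
    \<pi>!j < \<pi>!i \<and> \<pi>!i < \<pi>!(i + 1) \<and> \<pi>!i = \<pi>!j + 1"

lemma fishburn_iff: "fishburn \<pi> \<longleftrightarrow> (\<forall>i j. \<not> fishburn_pair \<pi> i j)"
  by (auto simp: fishburn_def fishburn_pair_def)

lemma fishburn_pair_snoc_iff:
  assumes "\<forall>y\<in>set \<sigma>. y \<le> Suc x"
  shows "fishburn_pair (\<sigma> @ [x]) i j \<longleftrightarrow> fishburn_pair \<sigma> i j"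
proof
  assume pair: "fishburn_pair (\<sigma> @ [x]) i j"
  show "fishburn_pair \<sigma> i j"
  proof (cases "j < length \<sigma>")
    case True
    then show ?thesis using pair by (auto simp: fishburn_pair_def nth_append)
  next
    case False
    then have "j = length \<sigma>" "i + 1 \<noteq> j" using pair by (auto simp: fishburn_pair_def)
    then have "i + 1 < length \<sigma>" "\<sigma>!i = Suc x" "Suc x < \<sigma>!(i + 1)"
      using pair by (auto simp: fishburn_pair_def nth_append)
    then show ?thesis using assms nth_mem by fastforce
  qed
qed (auto simp: fishburn_pair_def nth_append)

lemma fishburn_snoc_iff: "\<forall>y\<in>set \<sigma>. y \<le> Suc x \<Longrightarrow> fishburn (\<sigma> @ [x]) \<longleftrightarrow> fishburn \<sigma>"
  by (simp add: fishburn_iff fishburn_pair_snoc_iff)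

lemma mem_FA_iff:
  "\<pi> \<in> FA n \<longleftrightarrow>
    \<pi> \<in> perms n \<and> fishburn \<pi> \<and> \<not> contains \<pi> [3,2,1] \<and> \<not> contains \<pi> [1,4,2,5,3]"
  by (auto simp: FA_def F_def avoids_def)

lemma finite_perms: "finite (perms n)"
proof -
  have "perms n \<subseteq> {xs. set xs \<subseteq> {1..n} \<and> length xs = n}"
    unfolding perms_def using distinct_card by fastforce
  moreover have "finite {xs. set xs \<subseteq> {1..n} \<and> length xs = n}"
    by (rule finite_lists_length_eq) simp
  ultimately show ?thesis by (rule finite_subset)
qed

lemma FA_subset_perms: "FA n \<subseteq> perms n"
  unfolding FA_def F_def by blast

lemma finite_FA: "finite (FA n)"
  using finite_perms FA_subset_perms by (rule finite_subset[rotated])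

lemma length_perms: "\<pi> \<in> perms n \<Longrightarrow> length \<pi> = n"
  unfolding perms_def using distinct_card by fastforce

lemma snoc_max_in_FA_iff:
  assumes "\<sigma> \<in> perms m"
  shows "\<sigma> @ [Suc m] \<in> FA (Suc m) \<longleftrightarrow> \<sigma> \<in> FA m"
proof -
  have set: "set \<sigma> = {1..m}" "distinct \<sigma>" using assms by (auto simp: perms_def)
  have "\<sigma> @ [Suc m] \<in> perms (Suc m)" using set by (auto simp: perms_def)
  moreover have "\<not> (Suc m < \<sigma>!i \<and> Suc m < \<sigma>!i')" if "i' < length \<sigma>" for i i'
    using set that nth_mem by fastforce
  then have "contains (\<sigma> @ [Suc m]) [3,2,1] \<longleftrightarrow> contains \<sigma> [3,2,1]"
    and "contains (\<sigma> @ [Suc m]) [1,4,2,5,3] \<longleftrightarrow> contains \<sigma> [1,4,2,5,3]"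
    using contains_snocD[of \<sigma> "Suc m" "[3,2,1]" 0 1]
      contains_snocD[of \<sigma> "Suc m" "[1,4,2,5,3]" 1 3] contains_append by auto
  moreover have "fishburn (\<sigma> @ [Suc m]) \<longleftrightarrow> fishburn \<sigma>"
    using set by (intro fishburn_snoc_iff) auto
  ultimately show ?thesis using assms by (auto simp: mem_FA_iff)
qed

definition lift :: "nat \<Rightarrow> nat \<Rightarrow> nat" where
  "lift m x = (if x = m then Suc m else x)"

definition lower :: "nat \<Rightarrow> nat \<Rightarrow> nat" where
  "lower m x = (if x = Suc m then m else x)"

text \<open>The maximum of a permutation can occupy neither position \<open>i\<close> nor position \<open>j\<close> of a
  Fishburn pair, so raising it does not change the Fishburn pairs.\<close>

lemma fishburn_pair_map_lift:
  assumes "set \<sigma> \<subseteq> {1..m}"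
  shows "fishburn_pair (map (lift m) \<sigma>) i j \<longleftrightarrow> fishburn_pair \<sigma> i j"
proof (cases "i < j \<and> j < length \<sigma> \<and> i + 1 < length \<sigma>")
  case True
  have le: "\<sigma>!k \<le> m" if "k < length \<sigma>" for k using assms nth_mem[OF that] by auto
  have "\<sigma>!i \<le> m" "\<sigma>!j \<le> m" "\<sigma>!(i + 1) \<le> m" using True le by auto
  then show ?thesis using True unfolding fishburn_pair_def by (auto simp: lift_def)
qed (auto simp: fishburn_pair_def)

lemma snoc_lift_in_FA_iff:
  assumes "\<sigma> \<in> perms m" "1 \<le> m"
  shows "map (lift m) \<sigma> @ [m] \<in> FA (Suc m) \<longleftrightarrow> \<sigma> \<in> FA m"
proof -
  let ?\<tau> = "map (lift m) \<sigma>"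
  have set: "set \<sigma> = {1..m}" "distinct \<sigma>" using assms by (auto simp: perms_def)
  have mono: "strict_mono_on (set \<sigma>) (lift m)"
    using set by (auto simp: lift_def strict_mono_on_def)
  have "lift m ` {1..<m} = {1..<m}" by (auto simp: lift_def)
  moreover have "{1..m} = insert m {1..<m}" using assms(2) by auto
  ultimately have set_\<tau>: "set ?\<tau> = {1..<m} \<union> {Suc m}"
    using set by (simp add: lift_def) auto
  have dist_\<tau>: "distinct ?\<tau>" using set mono strict_mono_on_imp_inj_on by (auto simp: distinct_map)
  have "?\<tau> @ [m] \<in> perms (Suc m)" using set_\<tau> dist_\<tau> assms(2) by (auto simp: perms_def)
  moreover have "\<not> (m < ?\<tau>!i \<and> m < ?\<tau>!i')" if "i < i'" "i' < length ?\<tau>" for i i'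
  proof
    assume "m < ?\<tau>!i \<and> m < ?\<tau>!i'"
    moreover have "?\<tau>!i \<in> set ?\<tau>" "?\<tau>!i' \<in> set ?\<tau>" using that by auto
    ultimately have "?\<tau>!i = ?\<tau>!i'" unfolding set_\<tau> by auto
    then show False using that dist_\<tau> nth_eq_iff_index_eq by fastforce
  qed
  then have "contains (?\<tau> @ [m]) [3,2,1] \<longleftrightarrow> contains \<sigma> [3,2,1]"
    and "contains (?\<tau> @ [m]) [1,4,2,5,3] \<longleftrightarrow> contains \<sigma> [1,4,2,5,3]"
    using contains_snocD[of ?\<tau> m "[3,2,1]" 0 1] contains_snocD[of ?\<tau> m "[1,4,2,5,3]" 1 3]
      contains_append contains_map_strict_mono_on[OF mono] by auto
  moreover have "fishburn (?\<tau> @ [m]) \<longleftrightarrow> fishburn \<sigma>"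
    using set set_\<tau> fishburn_pair_map_lift[of \<sigma> m]
    by (subst fishburn_snoc_iff) (auto simp: fishburn_iff)
  ultimately show ?thesis using assms by (auto simp: mem_FA_iff)
qed

lemma perms_Suc_butlast:
  assumes "\<pi> \<in> perms (Suc m)"
  shows "\<pi> \<noteq> []" "distinct (butlast \<pi>)" "set (butlast \<pi>) = {1..Suc m} - {last \<pi>}"
proof -
  show ne: "\<pi> \<noteq> []" using assms by (auto simp: perms_def)
  have "distinct (butlast \<pi> @ [last \<pi>])" "set (butlast \<pi> @ [last \<pi>]) = {1..Suc m}"
    unfolding append_butlast_last_id[OF ne] using assms by (simp_all add: perms_def)
  then show "distinct (butlast \<pi>)" "set (butlast \<pi>) = {1..Suc m} - {last \<pi>}" by auto
qed

lemma perms_Suc_last_max: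
  assumes "\<pi> \<in> perms (Suc m)" "last \<pi> = Suc m"
  obtains \<sigma> where "\<sigma> \<in> perms m" "\<pi> = \<sigma> @ [Suc m]"
proof
  have "set (butlast \<pi>) = {1..Suc m} - {Suc m}"
    using perms_Suc_butlast(3)[OF assms(1)] assms(2) by simp
  also have "\<dots> = {1..m}" by auto
  finally show "butlast \<pi> \<in> perms m"
    using perms_Suc_butlast(2)[OF assms(1)] by (simp add: perms_def)
  have "butlast \<pi> @ [last \<pi>] = \<pi>" using perms_Suc_butlast(1)[OF assms(1)] by simp
  then show "\<pi> = butlast \<pi> @ [Suc m]" using assms(2) by simp
qed

lemma perms_Suc_last_pred:
  assumes "\<pi> \<in> perms (Suc m)" "last \<pi> = m" "1 \<le> m"
  obtains \<sigma> where "\<sigma> \<in> perms m" "\<pi> = map (lift m) \<sigma> @ [m]"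
proof
  let ?\<tau> = "butlast \<pi>"
  have \<tau>: "distinct ?\<tau>" "set ?\<tau> = {1..Suc m} - {m}"
    using perms_Suc_butlast(2,3)[OF assms(1)] assms(2) by simp_all
  have "inj_on (lower m) (set ?\<tau>)" using \<tau>(2) by (auto simp: lower_def inj_on_def)
  moreover have "lower m ` ({1..Suc m} - {m}) = {1..m}"
  proof (intro equalityI subsetI)
    fix x assume x: "x \<in> {1..m}"
    show "x \<in> lower m ` ({1..Suc m} - {m})"
    proof (cases "x = m")
      case True
      then show ?thesis using assms(3) by (intro image_eqI[of _ _ "Suc m"]) (auto simp: lower_def)
    next
      case False
      then show ?thesis using x by (intro image_eqI[of _ _ x]) (auto simp: lower_def)
    qed
  qed (use assms(3) in \<open>auto simp: lower_def\<close>)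
  ultimately show "map (lower m) ?\<tau> \<in> perms m"
    using \<tau> by (simp add: perms_def distinct_map)
  have "lift m (lower m x) = x" if "x \<in> set ?\<tau>" for x
    using that \<tau>(2) by (auto simp: lift_def lower_def)
  then have "map (lift m) (map (lower m) ?\<tau>) = ?\<tau>" by (simp add: map_idI)
  moreover have "?\<tau> @ [last \<pi>] = \<pi>" using perms_Suc_butlast(1)[OF assms(1)] by simp
  ultimately show "\<pi> = map (lift m) (map (lower m) ?\<tau>) @ [m]" using assms(2) by simp
qed

lemma card_FA_last_max: "card {\<pi> \<in> FA (Suc m). last \<pi> = Suc m} = card (FA m)"
proof -
  have "(\<lambda>\<sigma>. \<sigma> @ [Suc m]) ` FA m = {\<pi> \<in> FA (Suc m). last \<pi> = Suc m}"
  proof (intro equalityI subsetI)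
    fix \<pi> assume "\<pi> \<in> {\<pi> \<in> FA (Suc m). last \<pi> = Suc m}"
    then obtain \<sigma> where "\<sigma> \<in> perms m" "\<pi> = \<sigma> @ [Suc m]" "\<pi> \<in> FA (Suc m)"
      using perms_Suc_last_max FA_subset_perms by blast
    then show "\<pi> \<in> (\<lambda>\<sigma>. \<sigma> @ [Suc m]) ` FA m" using snoc_max_in_FA_iff by blast
  qed (use snoc_max_in_FA_iff FA_subset_perms in auto)
  then have "bij_betw (\<lambda>\<sigma>. \<sigma> @ [Suc m]) (FA m) {\<pi> \<in> FA (Suc m). last \<pi> = Suc m}"
    by (intro bij_betw_imageI) (auto simp: inj_on_def)
  then show ?thesis by (simp add: bij_betw_same_card)
qed

lemma card_FA_last_pred:
  assumes "1 \<le> m"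
  shows "card {\<pi> \<in> FA (Suc m). last \<pi> = m} = card (FA m)"
proof -
  have "(\<lambda>\<sigma>. map (lift m) \<sigma> @ [m]) ` FA m = {\<pi> \<in> FA (Suc m). last \<pi> = m}"
  proof (intro equalityI subsetI)
    fix \<pi> assume "\<pi> \<in> {\<pi> \<in> FA (Suc m). last \<pi> = m}"
    then obtain \<sigma> where "\<sigma> \<in> perms m" "\<pi> = map (lift m) \<sigma> @ [m]" "\<pi> \<in> FA (Suc m)"
      using perms_Suc_last_pred assms FA_subset_perms by blast
    then show "\<pi> \<in> (\<lambda>\<sigma>. map (lift m) \<sigma> @ [m]) ` FA m" using snoc_lift_in_FA_iff assms by blast
  qed (use snoc_lift_in_FA_iff assms FA_subset_perms in auto)
  moreover have "inj_on (map (lift m)) (FA m)"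
  proof (rule inj_on_mapI)
    have "\<Union> (set ` FA m) \<subseteq> {1..m}" using FA_subset_perms by (auto simp: perms_def)
    moreover have "inj_on (lift m) {1..m}" by (auto simp: lift_def inj_on_def)
    ultimately show "inj_on (lift m) (\<Union> (set ` FA m))" by (rule inj_on_subset[rotated])
  qed
  then have "inj_on (\<lambda>\<sigma>. map (lift m) \<sigma> @ [m]) (FA m)" by (auto simp: inj_on_def)
  ultimately have "bij_betw (\<lambda>\<sigma>. map (lift m) \<sigma> @ [m]) (FA m) {\<pi> \<in> FA (Suc m). last \<pi> = m}"
    by (intro bij_betw_imageI)
  then show ?thesis by (simp add: bij_betw_same_card)
qed

declare upt_Suc[simp del]

definition block_perm :: "nat \<Rightarrow> nat \<Rightarrow> nat \<Rightarrow> nat list" where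
  "block_perm n v j = Suc v # [1..<Suc j] @ [v+2..<Suc n] @ [Suc j..<v] @ [v]"

definition block_params :: "nat \<Rightarrow> nat \<Rightarrow> nat \<Rightarrow> bool" where
  "block_params n v j \<longleftrightarrow> 2 \<le> v \<and> v + 2 \<le> n \<and> 1 \<le> j \<and> j < v"

definition block_entry :: "nat \<Rightarrow> nat \<Rightarrow> nat \<Rightarrow> nat \<Rightarrow> nat" where
  "block_entry n v j i =
    (if i = 0 then Suc v else if i \<le> j then i else if i \<le> j + (n - v - 1) then i + v + 1 - j
     else if i < n - 1 then i + v + 1 - n else v)"

lemma length_block_perm: "block_params n v j \<Longrightarrow> length (block_perm n v j) = n"
  by (auto simp: block_perm_def block_params_def)

lemma last_block_perm: "last (block_perm n v j) = v"
  by (simp add: block_perm_def)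

lemma nth_block_perm:
  assumes "block_params n v j" "i < n"
  shows "block_perm n v j ! i = block_entry n v j i"
proof -
  have p: "2 \<le> v" "v + 2 \<le> n" "1 \<le> j" "j < v" using assms(1) by (auto simp: block_params_def)
  let ?B = "[v+2..<Suc n]" and ?C = "[Suc j..<v]"
  have tail: "block_perm n v j ! i = ([1..<Suc j] @ ?B @ ?C @ [v]) ! (i - 1)" if "0 < i"
    using that by (simp add: block_perm_def nth_Cons')
  consider "i = 0" | "0 < i" "i \<le> j" | "j < i" "i \<le> j + (n - v - 1)"
    | "j + (n - v - 1) < i" "i < n - 1" | "i = n - 1"
    using assms(2) by linarith
  then show ?thesis
  proof cases
    case 1
    then show ?thesis by (simp add: block_perm_def block_entry_def)
  next
    case 2
    moreover have "i - 1 < j" using 2 by linarith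
    ultimately have "block_perm n v j ! i = [1..<Suc j] ! (i - 1)"
      using tail by (simp add: nth_append)
    then show ?thesis using 2 by (simp add: block_entry_def)
  next
    case 3
    moreover have "j \<le> i - 1" "i - 1 - j < n - v - 1" using 3 p by linarith+
    ultimately have "block_perm n v j ! i = ?B ! (i - 1 - j)" using tail by (simp add: nth_append)
    then show ?thesis using 3 p by (simp add: block_entry_def)
  next
    case 4
    moreover have "j \<le> i - 1" "n - v - 1 \<le> i - 1 - j" "i - 1 - j - (n - v - 1) < v - Suc j"
      using 4 p by linarith+
    ultimately have "block_perm n v j ! i = ?C ! (i - 1 - j - (n - v - 1))"
      using tail by (simp add: nth_append)
    then show ?thesis using 4 p by (auto simp: block_entry_def)
  next
    case 5
    have "block_perm n v j \<noteq> []" by (simp add: block_perm_def)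
    then have "block_perm n v j ! i = v"
      using 5 last_block_perm[of n v j] length_block_perm[OF assms(1)]
      by (simp add: last_conv_nth)
    moreover have "\<not> i \<le> j + (n - v - 1)" "\<not> i \<le> j" "\<not> i < n - 1" using 5 p by linarith+
    ultimately show ?thesis using 5 by (simp add: block_entry_def)
  qed
qed

lemma block_perm_in_perms:
  assumes "block_params n v j"
  shows "block_perm n v j \<in> perms n"
proof -
  have p: "2 \<le> v" "v + 2 \<le> n" "1 \<le> j" "j < v" using assms by (auto simp: block_params_def)
  have "{1..n} = insert (Suc v) ({1..<Suc j} \<union> {v+2..<Suc n} \<union> {Suc j..<v} \<union> {v})"
    using p by auto
  then show ?thesis using p by (auto simp: perms_def block_perm_def)
qed

text \<open>The positions \<open>j < i \<le> j + (n - v - 1)\<close> carry the block \<open>(v+2) \<dots> n\<close>.\<close>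

lemma block_entry_inversion:
  assumes "block_params n v j" "i < i'" "i' < n" "block_entry n v j i' < block_entry n v j i"
  shows "i = 0 \<or> (j < i \<and> i \<le> j + (n - v - 1) \<and> j + (n - v - 1) < i')"
  using assms unfolding block_params_def block_entry_def by (auto split: if_splits)

context
  fixes n v j :: nat
  assumes params: "block_params n v j"
begin

private lemma block_perm_facts:
  "2 \<le> v" "v + 2 \<le> n" "1 \<le> j" "j < v" "length (block_perm n v j) = n"
  "\<And>i. i < n \<Longrightarrow> block_perm n v j ! i = block_entry n v j i"
  using params length_block_perm nth_block_perm by (auto simp: block_params_def)

lemma block_perm_avoids_321: "\<not> contains (block_perm n v j) [3,2,1]"
proof
  assume "contains (block_perm n v j) [3,2,1]"
  then obtain a b c where "a < b" "b < c" "c < n"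
    "block_entry n v j b < block_entry n v j a" "block_entry n v j c < block_entry n v j b"
    unfolding contains_321_iff using block_perm_facts by auto
  moreover from this have "j < b \<and> b \<le> j + (n - v - 1) \<and> j + (n - v - 1) < c" "a = 0"
    using block_entry_inversion[OF params, of b c] block_entry_inversion[OF params, of a b]
    by auto
  ultimately show False using block_perm_facts by (auto simp: block_entry_def split: if_splits)
qed

lemma block_perm_avoids_14253: "\<not> contains (block_perm n v j) [1,4,2,5,3]"
proof
  assume "contains (block_perm n v j) [1,4,2,5,3]"
  then obtain a b c d e where "a < b" "b < c" "c < d" "d < e" "e < n"
    "block_entry n v j c < block_entry n v j b" "block_entry n v j e < block_entry n v j d"
    unfolding contains_14253_iff using block_perm_facts by (auto dest: order.strict_trans)
  then show False
    using block_entry_inversion[OF params, of b c] block_entry_inversion[OF params, of d e]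
    by auto
qed

lemma fishburn_block_perm: "fishburn (block_perm n v j)"
  unfolding fishburn_iff
proof (intro allI notI)
  fix i k
  assume "fishburn_pair (block_perm n v j) i k"
  then have h: "i < k" "k < n" "i + 1 < n" "block_entry n v j k < block_entry n v j i"
    "block_entry n v j i < block_entry n v j (i + 1)"
    "block_entry n v j i = block_entry n v j k + 1"
    using block_perm_facts(5,6) by (auto simp: fishburn_pair_def)
  consider "i = 0" | "j < i" "i \<le> j + (n - v - 1)" "j + (n - v - 1) < k"
    using block_entry_inversion[OF params h(1,2,4)] by blast
  then show False
  proof cases
    case 1
    then show False using h block_perm_facts by (auto simp: block_entry_def)
  next
    case 2
    then have "v + 2 \<le> block_entry n v j i" using block_perm_facts by (simp add: block_entry_def)
    moreover have "block_entry n v j k \<le> v"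
      using 2 h block_perm_facts by (auto simp: block_entry_def split: if_splits)
    ultimately show False using h(6) by simp
  qed
qed

lemma block_perm_in_FA: "block_perm n v j \<in> FA n"
  using block_perm_in_perms[OF params] block_perm_avoids_321 block_perm_avoids_14253
    fishburn_block_perm by (simp add: mem_FA_iff)

end

lemma block_perm_inject:
  assumes "block_params n v j" "block_params n v' j'" "block_perm n v j = block_perm n v' j'"
  shows "v = v' \<and> j = j'"
proof -
  have v: "v = v'" using assms(3) last_block_perm by metis
  have "block_perm n v i \<noteq> block_perm n v i'"
    if "block_params n v i" "block_params n v i'" "i < i'" for i i'
  proof -
    have i: "Suc i < n" "i < v" using that by (auto simp: block_params_def)
    have "block_perm n v i ! Suc i = v + 2"
      using that nth_block_perm[OF that(1) i(1)] by (auto simp: block_params_def block_entry_def)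
    moreover have "block_perm n v i' ! Suc i = Suc i"
      using that nth_block_perm[OF that(2) i(1)] by (auto simp: block_params_def block_entry_def)
    ultimately show ?thesis using i by auto
  qed
  then have "j = j'" using assms v by (metis linorder_neqE_nat)
  with v show ?thesis by simp
qed

lemma card_block_params: "card {(v, j). block_params (k + 2) v j} = k choose 2"
proof -
  let ?A = "{(v, j). block_params (k + 2) v j}"
  have "(\<lambda>(v, j). {j, v}) ` ?A = {B. B \<subseteq> {1..k} \<and> card B = 2}"
  proof (intro equalityI subsetI)
    fix B assume "B \<in> {B. B \<subseteq> {1..k} \<and> card B = 2}"
    then obtain x y where "B = {x, y}" "x < y" "{x, y} \<subseteq> {1..k}"
      by (auto simp: card_2_iff) (metis insert_commute linorder_neqE_nat)
    then show "B \<in> (\<lambda>(v, j). {j, v}) ` ?A"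
      by (intro image_eqI[of _ _ "(y, x)"]) (auto simp: block_params_def)
  qed (auto simp: block_params_def)
  moreover have "inj_on (\<lambda>(v, j). {j, v}) ?A"
  proof (rule inj_onI)
    fix x y assume "x \<in> ?A" "y \<in> ?A" "(\<lambda>(v, j). {j, v}) x = (\<lambda>(v, j). {j, v}) y"
    moreover obtain v j v' j' where "x = (v, j)" "y = (v', j')" by fastforce
    ultimately show "x = y" unfolding block_params_def by (simp add: doubleton_eq_iff) linarith
  qed
  then have "card ((\<lambda>(v, j). {j, v}) ` ?A) = card ?A" by (rule card_image)
  ultimately show ?thesis by (simp add: n_subsets)
qed

lemma three_block_split:
  assumes "\<And>a b c. a < b \<Longrightarrow> b < c \<Longrightarrow> c < length xs \<Longrightarrow>
    P (xs!a) \<Longrightarrow> \<not> P (xs!b) \<Longrightarrow> P (xs!c) \<Longrightarrow> False"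
  obtains A B C
  where "xs = A @ B @ C" "\<forall>x\<in>set A. \<not> P x" "\<forall>x\<in>set B. P x" "\<forall>x\<in>set C. \<not> P x"
proof
  define A where "A = takeWhile (\<lambda>x. \<not> P x) xs"
  define R where "R = dropWhile (\<lambda>x. \<not> P x) xs"
  show split: "xs = A @ takeWhile P R @ dropWhile P R"
    by (simp add: A_def R_def)
  show "\<forall>x\<in>set A. \<not> P x" "\<forall>x\<in>set (takeWhile P R). P x"
    by (auto simp: A_def dest: set_takeWhileD)
  show "\<forall>y\<in>set (dropWhile P R). \<not> P y"
  proof (intro ballI notI)
    fix y assume y: "y \<in> set (dropWhile P R)" "P y"
    then obtain c C' where C: "dropWhile P R = c # C'" "\<not> P c"
      by (metis empty_iff hd_dropWhile list.collapse list.set(1))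
    then have "y \<in> set C'" using y by auto
    then obtain k where k: "k < length C'" "C' ! k = y" by (auto simp: in_set_conv_nth)
    have "R \<noteq> []" using C by auto
    then obtain b B' where B: "takeWhile P R = b # B'" "P b"
      unfolding R_def by (metis (mono_tags, lifting) dropWhile_eq_Nil_conv hd_dropWhile
          list.collapse takeWhile.simps(2))
    have xs: "xs = A @ (b # B') @ (c # C')" using split by (simp only: B(1) C(1))
    define ib where "ib = length A + length (b # B')"
    have len: "length xs = ib + 1 + length C'" unfolding ib_def by (subst xs) simp
    have "xs ! length A = b" "xs ! ib = c" "xs ! (ib + 1 + k) = y"
      unfolding ib_def using k by (subst xs; simp add: nth_append)+
    moreover have "length A < ib" "ib < ib + 1 + k" "ib + 1 + k < length xs"
      using len k by (simp_all add: ib_def)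
    ultimately show False using assms B(2) C(2) y(2) by metis
  qed
qed

lemma sorted_wrt_filter_less:
  "sorted_wrt (\<lambda>x y. P x \<longrightarrow> P y \<longrightarrow> x < y) xs \<Longrightarrow> sorted_wrt (<) (filter P xs)"
  by (induction xs) (auto simp: sorted_wrt_filter)

lemma sorted_wrt_less_eq_upt: "sorted_wrt (<) xs \<Longrightarrow> set xs = {a..<b} \<Longrightarrow> xs = [a..<b]"
  using sorted_distinct_set_unique[of xs "[a..<b]"] strict_sorted_iff by auto

locale FA_last_small =
  fixes \<pi> :: "nat list" and n v :: nat
  assumes in_FA: "\<pi> \<in> FA n" and last_eq: "last \<pi> = v" and last_small: "v + 2 \<le> n"
begin

lemma in_perms: "\<pi> \<in> perms n"
  using in_FA FA_subset_perms by blast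

lemma distinct: "distinct \<pi>" and set_eq: "set \<pi> = {1..n}" and length_eq: "length \<pi> = n"
  using in_perms length_perms by (auto simp: perms_def)

lemma entry_bounds: "i < n \<Longrightarrow> 1 \<le> \<pi>!i \<and> \<pi>!i \<le> n"
  using set_eq length_eq nth_mem by fastforce

lemma entry_exists: "1 \<le> x \<Longrightarrow> x \<le> n \<Longrightarrow> \<exists>i<n. \<pi>!i = x"
  using set_eq length_eq by (metis atLeastAtMost_iff in_set_conv_nth)

lemma entries_distinct: "i < n \<Longrightarrow> i' < n \<Longrightarrow> i \<noteq> i' \<Longrightarrow> \<pi>!i \<noteq> \<pi>!i'"
  using distinct length_eq nth_eq_iff_index_eq by metis

lemma last_entry: "\<pi>!(n - 1) = v"
proof -
  have "\<pi> \<noteq> []" using length_eq last_small by auto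
  then show ?thesis using last_eq length_eq by (simp add: last_conv_nth)
qed

lemma three_le: "3 \<le> n" and one_le_v: "1 \<le> v"
proof -
  show "1 \<le> v" using entry_bounds[of "n - 1"] last_entry last_small by simp
  then show "3 \<le> n" using last_small by simp
qed

lemma no_321: "a < b \<Longrightarrow> b < c \<Longrightarrow> c < n \<Longrightarrow> \<pi>!b < \<pi>!a \<Longrightarrow> \<pi>!c < \<pi>!b \<Longrightarrow> False"
  using in_FA unfolding mem_FA_iff contains_321_iff length_eq by blast

lemma no_14253:
  "a < b \<Longrightarrow> b < c \<Longrightarrow> c < d \<Longrightarrow> d < e \<Longrightarrow> e < n \<Longrightarrow>
    \<pi>!a < \<pi>!c \<Longrightarrow> \<pi>!c < \<pi>!e \<Longrightarrow> \<pi>!e < \<pi>!b \<Longrightarrow> \<pi>!b < \<pi>!d \<Longrightarrow> False"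
  using in_FA unfolding mem_FA_iff contains_14253_iff length_eq by blast

lemma no_fishburn_pair:
  "i < k \<Longrightarrow> k < n \<Longrightarrow> i + 1 < n \<Longrightarrow> \<pi>!k < \<pi>!i \<Longrightarrow> \<pi>!i < \<pi>!(i + 1) \<Longrightarrow> \<pi>!i = \<pi>!k + 1 \<Longrightarrow> False"
  using in_FA unfolding mem_FA_iff fishburn_iff fishburn_pair_def length_eq by blast

lemma large_increasing:
  assumes "i < i'" "i' < n - 1" "v < \<pi>!i" "v < \<pi>!i'"
  shows "\<pi>!i < \<pi>!i'"
proof (rule ccontr)
  assume "\<not> \<pi>!i < \<pi>!i'"
  moreover have "\<pi>!i \<noteq> \<pi>!i'" using assms by (intro entries_distinct) auto
  ultimately show False
    using no_321[of i i' "n - 1"] assms last_entry by auto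
qed

lemma large_entry_position:
  assumes "x \<le> n" "v < x"
  obtains i where "i < n - 1" "\<pi>!i = x"
proof -
  have "1 \<le> x" using assms one_le_v by simp
  then obtain i where "i < n" "\<pi>!i = x" using entry_exists assms(1) by blast
  moreover have "i \<noteq> n - 1" using calculation last_entry assms by auto
  ultimately have "i < n - 1" "\<pi>!i = x" by auto
  then show ?thesis by (rule that)
qed

lemma succ_last_position:
  obtains i0 i2 where "\<pi>!i0 = Suc v" "\<pi>!i2 = v + 2" "i0 + 1 < i2" "i2 < n - 1"
    "\<pi>!(i0 + 1) < v" "\<And>i. i < i0 \<Longrightarrow> \<pi>!i < v"
proof -
  obtain i0 where i0: "i0 < n - 1" "\<pi>!i0 = Suc v"
    using large_entry_position[of "Suc v"] last_small by auto
  obtain i2 where i2: "i2 < n - 1" "\<pi>!i2 = v + 2"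
    using large_entry_position[of "v + 2"] last_small by auto
  have before: "\<pi>!i < v" if "i < i0" for i
  proof -
    have "\<pi>!i \<noteq> v" using that i0 last_entry entries_distinct[of i "n - 1"] by auto
    moreover have "\<not> v < \<pi>!i" using that i0 large_increasing[of i i0] by fastforce
    ultimately show ?thesis by simp
  qed
  have "i0 < i2"
  proof (rule ccontr)
    assume "\<not> i0 < i2"
    moreover have "i0 \<noteq> i2" using i0 i2 by auto
    ultimately show False using before[of i2] i2 by simp
  qed
  have "\<not> \<pi>!i0 < \<pi>!(i0 + 1)" \<comment> \<open>else \<open>v+1\<close> and the final \<open>v\<close> form a Fishburn pair\<close>
  proof
    assume "\<pi>!i0 < \<pi>!(i0 + 1)"
    moreover have "i0 < n - 1" "n - 1 < n" "i0 + 1 < n" using i0 three_le by auto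
    ultimately show False using no_fishburn_pair[of i0 "n - 1"] i0(2) last_entry by simp
  qed
  moreover have "\<pi>!(i0 + 1) \<noteq> \<pi>!i0" using i0 by (intro entries_distinct) auto
  ultimately have "\<pi>!(i0 + 1) < Suc v" using i0 by auto
  moreover have "i0 + 1 \<noteq> i2" using calculation i2 by auto
  moreover have "\<pi>!(i0 + 1) \<noteq> v"
    using \<open>i0 < i2\<close> i2 last_entry entries_distinct[of "i0 + 1" "n - 1"] calculation by auto
  ultimately show ?thesis using that i0 i2 before \<open>i0 < i2\<close> by auto
qed

lemma first_entry: "\<pi>!0 = Suc v"
proof (rule ccontr)
  assume first: "\<pi>!0 \<noteq> Suc v"
  obtain i0 i2 where i: "\<pi>!i0 = Suc v" "\<pi>!i2 = v + 2" "i0 + 1 < i2" "i2 < n - 1"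
    "\<pi>!(i0 + 1) < v" and before: "\<And>i. i < i0 \<Longrightarrow> \<pi>!i < v"
    by (rule succ_last_position) blast
  have "0 < i0" using first i by (cases i0) auto
  have "i0 + 1 < n" using i by simp
  \<comment> \<open>\<open>\<pi>\<^sub>a < \<pi>\<^sub>i\<^sub>0\<^sub>+\<^sub>1\<close> would make \<open>\<pi>\<^sub>a, v+1, \<pi>\<^sub>i\<^sub>0\<^sub>+\<^sub>1, v+2, v\<close> an occurrence of 14253\<close>
  have below_next: "\<pi>!(i0 + 1) < \<pi>!a" if "a < i0" for a
  proof -
    have "\<pi>!a \<noteq> \<pi>!(i0 + 1)" using that i by (intro entries_distinct) auto
    moreover have "\<not> \<pi>!a < \<pi>!(i0 + 1)"
      using no_14253[of a i0 "i0 + 1" i2 "n - 1"] that i last_entry by auto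
    ultimately show ?thesis by simp
  qed
  have "\<pi>!0 < \<pi>!1"
  proof (cases "i0 = 1")
    case True
    then show ?thesis using before[of 0] i by simp
  next
    case False
    with \<open>0 < i0\<close> have "1 < i0" by simp
    show ?thesis
    proof (rule ccontr)
      assume "\<not> \<pi>!0 < \<pi>!1"
      moreover have "\<pi>!0 \<noteq> \<pi>!1" using \<open>1 < i0\<close> i by (intro entries_distinct) auto
      ultimately show False
        using no_321[of 0 1 "i0 + 1"] below_next[of 1] \<open>1 < i0\<close> \<open>i0 + 1 < n\<close> by auto
    qed
  qed
  \<comment> \<open>then \<open>\<pi>\<^sub>0 - 1\<close> occurs later and forms a Fishburn pair with \<open>\<pi>\<^sub>0 < \<pi>\<^sub>1\<close>\<close>
  have two: "2 \<le> \<pi>!0"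
    using below_next[of 0] entry_bounds[of "i0 + 1"] \<open>0 < i0\<close> \<open>i0 + 1 < n\<close> by auto
  have "\<pi>!0 \<le> n" using entry_bounds[of 0] three_le by simp
  have "\<exists>q<n. \<pi>!q = \<pi>!0 - 1" by (rule entry_exists) (use two \<open>\<pi>!0 \<le> n\<close> in auto)
  then obtain q where q: "q < n" "\<pi>!q = \<pi>!0 - 1" by blast
  moreover have "0 < q" using q two by (cases q) auto
  moreover have "\<pi>!q < \<pi>!0" "\<pi>!0 = \<pi>!q + 1" using q two by auto
  ultimately show False
    using no_fishburn_pair[of 0 q] \<open>\<pi>!0 < \<pi>!1\<close> three_le by simp
qed

lemma second_entry: "\<pi>!1 = 1"
proof (rule ccontr)
  assume "\<pi>!1 \<noteq> 1"
  obtain i0 i2 where i: "\<pi>!i0 = Suc v" "i0 + 1 < i2" "i2 < n - 1" "\<pi>!(i0 + 1) < v"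
    using succ_last_position by metis
  then have "i0 = 0" using first_entry entries_distinct[of i0 0] by fastforce
  have "\<exists>q<n. \<pi>!q = 1" by (rule entry_exists) (use three_le in auto)
  then obtain q where q: "q < n" "\<pi>!q = 1" by blast
  have "q \<noteq> 0" using q first_entry one_le_v by (cases q) auto
  moreover have "q \<noteq> 1" using q \<open>\<pi>!1 \<noteq> 1\<close> by auto
  ultimately have "1 < q" by simp
  moreover have "1 < \<pi>!1" using \<open>\<pi>!1 \<noteq> 1\<close> entry_bounds[of 1] three_le by auto
  ultimately show False
    using no_321[of 0 1 q] q first_entry i \<open>i0 = 0\<close> by auto
qed

lemma two_le_v: "2 \<le> v"
proof -
  have "\<pi>!1 \<noteq> \<pi>!(n - 1)" using three_le by (intro entries_distinct) auto
  then show ?thesis using second_entry last_entry one_le_v by simp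
qed

lemma small_increasing:
  assumes "0 < i" "i < i'" "i' < n" "\<pi>!i < v" "\<pi>!i' < v"
  shows "\<pi>!i < \<pi>!i'"
proof (rule ccontr)
  assume "\<not> \<pi>!i < \<pi>!i'"
  moreover have "\<pi>!i \<noteq> \<pi>!i'" using assms by (intro entries_distinct) auto
  ultimately show False using no_321[of 0 i i'] assms first_entry by auto
qed

lemma no_large_small_large:
  assumes "1 < a" "a < b" "b < c" "c < n - 1" "v < \<pi>!a" "\<pi>!b < v" "v < \<pi>!c"
  shows False
proof -
  have "\<pi>!b \<noteq> \<pi>!1" using assms by (intro entries_distinct) auto
  moreover have "b < n" using assms by simp
  ultimately have "1 < \<pi>!b" using second_entry entry_bounds[of b] by fastforce
  moreover have "\<pi>!a < \<pi>!c" using large_increasing assms by auto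
  ultimately show False using no_14253[of 1 a b c "n - 1"] assms second_entry last_entry by auto
qed

definition middle :: "nat list" where
  "middle = butlast (tl \<pi>)"

lemma eq_middle: "\<pi> = Suc v # middle @ [v]"
proof -
  have "tl \<pi> \<noteq> []" using length_eq three_le by (cases \<pi>) auto
  then have "tl \<pi> = middle @ [v]"
    using last_eq length_eq three_le unfolding middle_def by (cases \<pi>) auto
  moreover have "\<pi> \<noteq> []" using length_eq three_le by auto
  then have "\<pi> = hd \<pi> # tl \<pi>" "hd \<pi> = Suc v" using first_entry by (simp, simp add: hd_conv_nth)
  ultimately show ?thesis by simp
qed

lemma length_middle: "length middle = n - 2"
  and nth_middle: "k < n - 2 \<Longrightarrow> middle ! k = \<pi> ! Suc k"
  using length_eq by (auto simp: middle_def nth_butlast nth_tl)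

lemma set_middle: "set middle = {1..n} - {v, Suc v}"
proof -
  have "distinct (Suc v # middle @ [v])" "set (Suc v # middle @ [v]) = {1..n}"
    using eq_middle distinct set_eq by simp_all
  then show ?thesis by auto
qed

lemma middle_blocks:
  obtains A B C where "middle = A @ B @ C" "\<forall>x\<in>set A. x < v" "\<forall>x\<in>set B. v < x"
    "\<forall>x\<in>set C. x < v"
proof (rule three_block_split[of middle "\<lambda>x. v < x"])
  fix a b c
  assume "a < b" "b < c" "c < length middle" "v < middle!a" "\<not> v < middle!b" "v < middle!c"
  moreover have "middle!0 = 1" using nth_middle[of 0] second_entry three_le by simp
  then have "1 < Suc a" using calculation two_le_v by (cases a) auto
  moreover have "middle!b \<noteq> v" using set_middle calculation(2,3) nth_mem by fastforce
  moreover have "Suc c < n - 1" using calculation length_middle by simp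
  ultimately show False
    using no_large_small_large[of "Suc a" "Suc b" "Suc c"] nth_middle length_middle by simp
next
  fix A B C
  assume "middle = A @ B @ C" "\<forall>x\<in>set A. \<not> v < x" "\<forall>x\<in>set B. v < x" "\<forall>x\<in>set C. \<not> v < x"
  moreover have "v \<notin> set A \<union> set C" using set_middle calculation(1) by auto
  ultimately show thesis using that by (metis Un_iff le_neq_implies_less not_less)
qed

lemma filter_small_middle: "filter (\<lambda>x. x < v) middle = [1..<v]"
proof (rule sorted_wrt_less_eq_upt)
  have "sorted_wrt (\<lambda>x y. x < v \<longrightarrow> y < v \<longrightarrow> x < y) middle"
    unfolding sorted_wrt_iff_nth_less length_middle using small_increasing nth_middle by auto
  then show "sorted_wrt (<) (filter (\<lambda>x. x < v) middle)" by (rule sorted_wrt_filter_less)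
  have "set (filter (\<lambda>x. x < v) middle) = {x \<in> {1..n} - {v, Suc v}. x < v}"
    using set_middle by auto
  also have "\<dots> = {1..<v}" using last_small by auto
  finally show "set (filter (\<lambda>x. x < v) middle) = {1..<v}" .
qed

lemma filter_large_middle: "filter (\<lambda>x. v < x) middle = [v + 2..<Suc n]"
proof (rule sorted_wrt_less_eq_upt)
  have "sorted_wrt (\<lambda>x y. v < x \<longrightarrow> v < y \<longrightarrow> x < y) middle"
    unfolding sorted_wrt_iff_nth_less length_middle using large_increasing nth_middle by auto
  then show "sorted_wrt (<) (filter (\<lambda>x. v < x) middle)" by (rule sorted_wrt_filter_less)
  have "set (filter (\<lambda>x. v < x) middle) = {x \<in> {1..n} - {v, Suc v}. v < x}"
    using set_middle by auto
  also have "\<dots> = {v + 2..<Suc n}" by auto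
  finally show "set (filter (\<lambda>x. v < x) middle) = {v + 2..<Suc n}" .
qed

lemma eq_block_perm:
  obtains j where "block_params n v j" "\<pi> = block_perm n v j"
proof -
  obtain A B C where M: "middle = A @ B @ C"
    and blocks: "\<forall>x\<in>set A. x < v" "\<forall>x\<in>set B. v < x" "\<forall>x\<in>set C. x < v"
    by (rule middle_blocks)
  have "filter (\<lambda>x. x < v) B = []" "filter (\<lambda>x. v < x) A = []" "filter (\<lambda>x. v < x) C = []"
    using blocks by (auto simp: filter_empty_conv)
  then have AC: "A @ C = [1..<v]" and B: "B = [v + 2..<Suc n]"
    using filter_small_middle filter_large_middle blocks unfolding M by simp_all
  have "middle \<noteq> []" using length_middle three_le by auto
  then have "hd middle = 1"
    using nth_middle[of 0] second_entry three_le by (simp add: hd_conv_nth)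
  moreover have "hd middle = v + 2" if "A = []" using that M B last_small by (simp add: upt_rec)
  ultimately have "A \<noteq> []" by auto
  define j where "j = length A"
  have "length A + length C = v - 1" using arg_cong[OF AC, of length] by simp
  then have "1 \<le> j" "j < v" using \<open>A \<noteq> []\<close> two_le_v by (simp_all add: j_def Suc_le_eq)
  moreover have "A = [1..<Suc j]" "C = [Suc j..<v]"
    using AC append_eq_conv_conj[of A C] calculation unfolding j_def by auto
  ultimately have "block_params n v j" "\<pi> = block_perm n v j"
    using two_le_v last_small eq_middle M B by (auto simp: block_params_def block_perm_def)
  then show thesis by (rule that)
qed

end

lemma card_FA_last_small: "card {\<pi> \<in> FA (k + 2). last \<pi> + 2 \<le> k + 2} = k choose 2"
proof -
  let ?P = "{(v, j). block_params (k + 2) v j}"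
  have "(\<lambda>(v, j). block_perm (k + 2) v j) ` ?P = {\<pi> \<in> FA (k + 2). last \<pi> + 2 \<le> k + 2}"
  proof (intro equalityI subsetI)
    fix \<pi> assume "\<pi> \<in> {\<pi> \<in> FA (k + 2). last \<pi> + 2 \<le> k + 2}"
    then interpret FA_last_small \<pi> "k + 2" "last \<pi>" by unfold_locales auto
    obtain j where "block_params (k + 2) (last \<pi>) j" "\<pi> = block_perm (k + 2) (last \<pi>) j"
      by (rule eq_block_perm)
    then show "\<pi> \<in> (\<lambda>(v, j). block_perm (k + 2) v j) ` ?P"
      by (intro image_eqI[of _ _ "(last \<pi>, j)"]) auto
  qed (auto simp: block_perm_in_FA last_block_perm block_params_def)
  moreover have "inj_on (\<lambda>(v, j). block_perm (k + 2) v j) ?P"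
    by (auto simp: inj_on_def dest: block_perm_inject)
  ultimately have "card {\<pi> \<in> FA (k + 2). last \<pi> + 2 \<le> k + 2} = card ?P"
    by (metis card_image)
  then show ?thesis using card_block_params[of k] by simp
qed

lemma card_FA_Suc_Suc: "card (FA (k + 2)) = 2 * card (FA (k + 1)) + (k choose 2)"
proof -
  let ?max = "{\<pi> \<in> FA (k + 2). last \<pi> = k + 2}"
  let ?pred = "{\<pi> \<in> FA (k + 2). last \<pi> = k + 1}"
  let ?small = "{\<pi> \<in> FA (k + 2). last \<pi> + 2 \<le> k + 2}"
  have "last \<pi> \<in> {1..k + 2}" if "\<pi> \<in> FA (k + 2)" for \<pi>
  proof -
    have "\<pi> \<in> perms (k + 2)" using that FA_subset_perms by blast
    then have "\<pi> \<noteq> []" "set \<pi> = {1..k + 2}" by (auto simp: perms_def)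
    then show ?thesis using last_in_set by blast
  qed
  then have "FA (k + 2) = (?max \<union> ?pred) \<union> ?small" by fastforce
  then have "card (FA (k + 2)) = card ((?max \<union> ?pred) \<union> ?small)" by (rule arg_cong)
  also have "\<dots> = (card ?max + card ?pred) + card ?small"
    using finite_FA[of "k + 2"] by (subst card_Un_disjoint; auto)+
  also have "card ?max = card (FA (k + 1))" using card_FA_last_max[of "k + 1"] by simp
  also have "card ?pred = card (FA (k + 1))" using card_FA_last_pred[of "k + 1"] by simp
  finally show ?thesis using card_FA_last_small[of k] by simp
qed

lemma card_FA_1: "card (FA 1) = 1"
proof -
  have "FA 0 = {[]}"
    using FA_subset_perms[of 0]
    by (auto simp: perms_def mem_FA_iff fishburn_iff fishburn_pair_def contains_Nil)
  moreover have "last \<pi> = 1" if "\<pi> \<in> FA 1" for \<pi>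
  proof -
    have "\<pi> \<noteq> []" "set \<pi> = {1}" using that FA_subset_perms[of 1] by (auto simp: perms_def)
    then show ?thesis using last_in_set by fastforce
  qed
  then have "{\<pi> \<in> FA 1. last \<pi> = 1} = FA 1" by blast
  ultimately show ?thesis using card_FA_last_max[of 0] by simp
qed

theorem mainTheorem16:
  fixes n :: nat
  assumes "n \<ge> 1"
  shows "int (card (F n [[3,2,1], [1,4,2,5,3]])) = 2 ^ n - int (n choose 2) - 1"
proof -
  have "int (card (FA (Suc k))) = 2 ^ Suc k - int (Suc k choose 2) - 1" for k
  proof (induction k)
    case 0
    then show ?case using card_FA_1 by simp
  next
    case (Suc k)
    have "Suc k choose 2 = (k choose 2) + k" "Suc (Suc k) choose 2 = (Suc k choose 2) + Suc k"
      by (simp_all add: numeral_2_eq_2)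
    then show ?case using Suc.IH card_FA_Suc_Suc[of k] by simp
  qed
  moreover obtain k where "n = Suc k" using assms by (cases n) auto
  ultimately show ?thesis by (simp add: FA_def)
qed

end
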